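(* On race-free networks of the session calculus, justness coincides with strong fairness of components: for every path starting in a race-free network, the path is just if and only if it is SC-fair.
   Context: Session calculus. Fix sets of locations $p,q,r,\dots$, labels $\lambda,\mu$ and recursion variables $X,Y$. Threads: $P ::= \mathbf{end} \mid \bigoplus_{i\in I} p_i!\lambda_i;P_i \mid \sum_{i\in I} p_i?\lambda_i;P_i \mid X \mid \mu X.P$, with $I$ finite (nonempty for $\bigoplus$) and expressions $\mu X.X$, $\mu X.\mu Y.P$ excluded. Networks: $N ::= p[\![P]\!] \mid 0 \mid N\parallel N$; in a network all locations are distinct, all threads are closed, and every location named in a send or receive is a location of $N$. Thread states additionally allow the form $\langle q!\lambda\rangle;P$ (an output already selected); network states are built from located thread states likewise, taken modulo the structural congruence $\equiv$ (associativity, commutativity of $\parallel$, $N\parallel 0\equiv N$). The transition relation is the least relation closed under $\equiv$ containing: (choice) $p[\![\bigoplus_{i\in I}p_i!\lambda_i;P_i]\!]\parallel N \xrightarrow{\tau} p[\![\langle p_k!\lambda_k\rangle;P_k]\!]\parallel N$ for $k\in I$; (unfold) $p[\![\mu X.P]\!]\parallel N\xrightarrow{\tau} p[\![P\{\mu X.P/X\}]\!]\parallel N$; (comm) $p_k[\![\langle q!\lambda_k\rangle;Q]\!]\parallel q[\![\sum_{i\in I}p_i?\lambda_i;P_i]\!]\parallel N \xrightarrow{(p_k,\lambda_k,q)} p_k[\![Q]\!]\parallel q[\![P_k]\!]\parallel N$ for $k\in I$. For a transition $t$, $\mathrm{comp}(t)$ is the single location moving in a $\tau$-transition and $\{p,q\}$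 for a label $(p,\lambda,q)$; $t$ involves $p$ if $p\in\mathrm{comp}(t)$; $t,u$ are concurrent if $\mathrm{comp}(t)\cap\mathrm{comp}(u)=\emptyset$. A path is a network state with a maximal (infinite or ending in a state without outgoing transitions) sequence of transitions. SC: location $p$ is enabled in a state if some transition from it involves $p$; relentlessly enabled on a path if every suffix contains a state where it is enabled. A path $\pi$ is SC-fair if for every suffix $\pi'$ and every location relentlessly enabled on $\pi'$, $\pi'$ contains a transition involving that location. Justness: $\pi$ is just if for every suffix of $\pi$ starting in state $s$ and every transition $t$ enabled in $s$, that suffix contains a transition $u$ not concurrent with $t$. A network state has a race if $N\xrightarrow{(p,\lambda,r)}N'$ and $N\xrightarrow{(q,\mu,r)}N''$ with $p\neq q$ or $N'\neq N''$; a network is race-free if no network state reachable from it has a race. *)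

theory Defs
  imports Main "HOL-Library.Extended_Nat"
begin

text \<open>A finite index set I is represented by a list of branches (location, label, continuation).
  Sel q lam P is the thread state \<langle>q!lam\<rangle>;P (an output already selected).
  Plain threads are the thread states without Sel.\<close>

datatype ('l, 'a, 'v) thread =
    End
  | Send "('l \<times> 'a \<times> ('l, 'a, 'v) thread) list"
  | Recv "('l \<times> 'a \<times> ('l, 'a, 'v) thread) list"
  | Var 'v
  | Mu 'v "('l, 'a, 'v) thread"
  | Sel 'l 'a "('l, 'a, 'v) thread"

text \<open>Substitution P{Q/X}; only ever used with a closed Q, so no capture can occur.\<close>
primrec subst :: "'v \<Rightarrow> ('l, 'a, 'v) thread \<Rightarrow> ('l, 'a, 'v) thread \<Rightarrow> ('l, 'a, 'v) thread" where
  "subst X Q End = End"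
| "subst X Q (Send bs) = Send (map (map_prod id (map_prod id (subst X Q))) bs)"
| "subst X Q (Recv bs) = Recv (map (map_prod id (map_prod id (subst X Q))) bs)"
| "subst X Q (Var Y) = (if Y = X then Q else Var Y)"
| "subst X Q (Mu Y P) = (if Y = X then Mu Y P else Mu Y (subst X Q P))"
| "subst X Q (Sel q a P) = Sel q a (subst X Q P)"

primrec fv :: "('l, 'a, 'v) thread \<Rightarrow> 'v set" where
  "fv End = {}"
| "fv (Send bs) = \<Union> (set (map (snd \<circ> snd) (map (map_prod id (map_prod id fv)) bs)))"
| "fv (Recv bs) = \<Union> (set (map (snd \<circ> snd) (map (map_prod id (map_prod id fv)) bs)))"
| "fv (Var Y) = {Y}"
| "fv (Mu Y P) = fv P - {Y}"
| "fv (Sel q a P) = fv P"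

primrec locs :: "('l, 'a, 'v) thread \<Rightarrow> 'l set" where
  "locs End = {}"
| "locs (Send bs) = fst ` set bs \<union> \<Union> (set (map (snd \<circ> snd) (map (map_prod id (map_prod id locs)) bs)))"
| "locs (Recv bs) = fst ` set bs \<union> \<Union> (set (map (snd \<circ> snd) (map (map_prod id (map_prod id locs)) bs)))"
| "locs (Var Y) = {}"
| "locs (Mu Y P) = locs P"
| "locs (Sel q a P) = insert q (locs P)"

primrec is_mu :: "('l, 'a, 'v) thread \<Rightarrow> bool" where
  "is_mu End = False"
| "is_mu (Send bs) = False"
| "is_mu (Recv bs) = False"
| "is_mu (Var Y) = False"
| "is_mu (Mu Y P) = True"
| "is_mu (Sel q a P) = False"

primrec wf_thread :: "('l, 'a, 'v) thread \<Rightarrow> bool" where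
  "wf_thread End = True"
| "wf_thread (Send bs) = (bs \<noteq> [] \<and> list_all id (map (snd \<circ> snd) (map (map_prod id (map_prod id wf_thread)) bs)))"
| "wf_thread (Recv bs) = list_all id (map (snd \<circ> snd) (map (map_prod id (map_prod id wf_thread)) bs))"
| "wf_thread (Var Y) = True"
| "wf_thread (Mu Y P) = (P \<noteq> Var Y \<and> \<not> is_mu P \<and> wf_thread P)"
| "wf_thread (Sel q a P) = False"

text \<open>A network state, taken modulo structural congruence (associativity, commutativity,
  unit 0), is exactly a finite partial map from (distinct) locations to thread states.\<close>
type_synonym ('l, 'a, 'v) net = "'l \<Rightarrow> ('l, 'a, 'v) thread option"

definition network :: "('l, 'a, 'v) net \<Rightarrow> bool" where
  "network N \<longleftrightarrow> finite (dom N) \<and>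
     (\<forall>p P. N p = Some P \<longrightarrow> wf_thread P \<and> fv P = {} \<and> locs P \<subseteq> dom N)"

datatype ('l, 'a) act = Tau 'l | Comm 'l 'a 'l

fun comp :: "('l, 'a) act \<Rightarrow> 'l set" where
  "comp (Tau p) = {p}"
| "comp (Comm p a q) = {p, q}"

inductive step :: "('l, 'a, 'v) net \<Rightarrow> ('l, 'a) act \<Rightarrow> ('l, 'a, 'v) net \<Rightarrow> bool" where
  choice: "N p = Some (Send bs) \<Longrightarrow> (q, a, P) \<in> set bs \<Longrightarrow>
             step N (Tau p) (N(p \<mapsto> Sel q a P))"
| unfold: "N p = Some (Mu X P) \<Longrightarrow> step N (Tau p) (N(p \<mapsto> subst X (Mu X P) P))"
| comm: "p \<noteq> q \<Longrightarrow> N p = Some (Sel q a Q) \<Longrightarrow> N q = Some (Recv bs) \<Longrightarrow> (p, a, P) \<in> set bs \<Longrightarrow>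
             step N (Comm p a q) (N(p \<mapsto> Q, q \<mapsto> P))"

text \<open>A path of length len (possibly infinite): states st 0, st 1, ... (indices i with i \<le> len)
  and actions ac i from st i to st (Suc i) for i < len; maximal, i.e. if finite the last state
  has no outgoing transitions.\<close>
definition is_path :: "(nat \<Rightarrow> ('l, 'a, 'v) net) \<Rightarrow> (nat \<Rightarrow> ('l, 'a) act) \<Rightarrow> enat \<Rightarrow> bool" where
  "is_path st ac len \<longleftrightarrow>
     (\<forall>i. enat i < len \<longrightarrow> step (st i) (ac i) (st (Suc i))) \<and>
     (\<forall>n. len = enat n \<longrightarrow> \<not> (\<exists>a s'. step (st n) a s'))"

definition enabled :: "'l \<Rightarrow> ('l, 'a, 'v) net \<Rightarrow> bool" where
  "enabled p s \<longleftrightarrow> (\<exists>a s'. step s a s' \<and> p \<in> comp a)"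

definition relentlessly_enabled ::
  "'l \<Rightarrow> (nat \<Rightarrow> ('l, 'a, 'v) net) \<Rightarrow> enat \<Rightarrow> nat \<Rightarrow> bool" where
  "relentlessly_enabled p st len k \<longleftrightarrow>
     (\<forall>m \<ge> k. enat m \<le> len \<longrightarrow> (\<exists>i \<ge> m. enat i \<le> len \<and> enabled p (st i)))"

definition sc_fair :: "(nat \<Rightarrow> ('l, 'a, 'v) net) \<Rightarrow> (nat \<Rightarrow> ('l, 'a) act) \<Rightarrow> enat \<Rightarrow> bool" where
  "sc_fair st ac len \<longleftrightarrow>
     (\<forall>k p. enat k \<le> len \<longrightarrow> relentlessly_enabled p st len k \<longrightarrow>
        (\<exists>j \<ge> k. enat j < len \<and> p \<in> comp (ac j)))"

definition just :: "(nat \<Rightarrow> ('l, 'a, 'v) net) \<Rightarrow> (nat \<Rightarrow> ('l, 'a) act) \<Rightarrow> enat \<Rightarrow> bool" where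
  "just st ac len \<longleftrightarrow>
     (\<forall>k a s'. enat k \<le> len \<longrightarrow> step (st k) a s' \<longrightarrow>
        (\<exists>j \<ge> k. enat j < len \<and> comp (ac j) \<inter> comp a \<noteq> {}))"

definition has_race :: "('l, 'a, 'v) net \<Rightarrow> bool" where
  "has_race N \<longleftrightarrow> (\<exists>p q r a b N' N''. step N (Comm p a r) N' \<and> step N (Comm q b r) N'' \<and>
                     (p \<noteq> q \<or> N' \<noteq> N''))"

definition reachable :: "('l, 'a, 'v) net \<Rightarrow> ('l, 'a, 'v) net \<Rightarrow> bool" where
  "reachable N M \<longleftrightarrow> (\<lambda>s s'. \<exists>a. step s a s')\<^sup>*\<^sup>* N M"

definition race_free :: "('l, 'a, 'v) net \<Rightarrow> bool" where
  "race_free N \<longleftrightarrow> (\<forall>M. reachable N M \<longrightarrow> \<not> has_race M)"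

end

theory Submission
  imports Defs
begin

text \<open>A transition inspects and changes only the locations it involves, so along a path an
  enabled transition t stays enabled until a transition sharing a location with t fires.
  If the path is just, such a transition u must fire; in a race-free state u involves every
  location of t, since a receiver can only synchronise with the sender already committed to it.
  So each location of an enabled transition eventually moves, which gives SC-fairness.
  Conversely, if no transition ever shares a location with t, the locations of t stay enabled
  for ever and SC-fairness makes one of them move.\<close>

lemma step_unchanged_outside_comp: "step s a s' \<Longrightarrow> x \<notin> comp a \<Longrightarrow> s' x = s x"
  by (induction rule: step.induct) auto

lemma step_if_agree_on_comp:
  "step s a s' \<Longrightarrow> (\<forall>x\<in>comp a. t x = s x) \<Longrightarrow> \<exists>t'. step t a t'"
  by (induction rule: step.induct) (auto intro: step.intros)

lemma step_Comm_D:
  "step s (Comm x b y) s' \<Longrightarrow> \<exists>Q bs. s x = Some (Sel y b Q) \<and> s y = Some (Recv bs)"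
  by (cases rule: step.cases) auto

lemma step_from_Sel:
  "step s a s' \<Longrightarrow> s p = Some (Sel q b Q) \<Longrightarrow> p \<in> comp a \<Longrightarrow> a = Comm p b q"
  by (cases rule: step.cases) auto

lemma step_from_Recv:
  "step s a s' \<Longrightarrow> s p = Some (Recv bs) \<Longrightarrow> p \<in> comp a \<Longrightarrow> \<exists>r c. a = Comm r c p"
  by (cases rule: step.cases) auto

lemma conflicting_step_covers_comp:
  assumes "\<not> has_race s" and t: "step s t s1" and u: "step s u s2"
    and conflict: "comp t \<inter> comp u \<noteq> {}"
  shows "comp t \<subseteq> comp u"
proof (cases t)
  case (Tau p)
  then show ?thesis using conflict by auto
next
  case (Comm x b y)
  with t have t': "step s (Comm x b y) s1" by simp
  obtain Q bs where sel: "s x = Some (Sel y b Q)" and recv: "s y = Some (Recv bs)"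
    using step_Comm_D[OF t'] by blast
  show ?thesis
  proof (cases "x \<in> comp u")
    case True
    then show ?thesis using step_from_Sel[OF u sel] Comm by simp
  next
    case False
    then have "y \<in> comp u" using conflict Comm by auto
    then obtain r c where rc: "u = Comm r c y" using step_from_Recv[OF u recv] by blast
    with u have "step s (Comm r c y) s2" by simp
    with t' have "r = x"
      using assms(1) unfolding has_race_def by blast
    then show ?thesis using Comm rc by auto
  qed
qed

lemma path_step: "is_path st ac len \<Longrightarrow> enat i < len \<Longrightarrow> step (st i) (ac i) (st (Suc i))"
  unfolding is_path_def by blast

lemma path_reachable: "is_path st ac len \<Longrightarrow> enat i \<le> len \<Longrightarrow> reachable (st 0) (st i)"
proof (induction i)
  case 0
  then show ?case by (simp add: reachable_def)
next
  case (Suc i)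
  then have "enat i < len" by (simp add: Suc_ile_eq)
  with Suc show ?case
    using path_step[of st ac len i] unfolding reachable_def
    by (metis (mono_tags, lifting) order_less_imp_le rtranclp.rtrancl_into_rtrancl)
qed

lemma path_agree_on:
  assumes path: "is_path st ac len" and "enat m \<le> len" and "i \<le> m"
    and idle: "\<forall>j. i \<le> j \<longrightarrow> j < m \<longrightarrow> comp (ac j) \<inter> A = {}" and "x \<in> A"
  shows "st m x = st i x"
  using \<open>i \<le> m\<close>
proof (induction m rule: dec_induct)
  case (step n)
  then have "enat n < len" using \<open>enat m \<le> len\<close> by (meson enat_ord_simps(2) order_less_le_trans)
  then have "step (st n) (ac n) (st (Suc n))" using path_step[OF path] by blast
  moreover have "x \<notin> comp (ac n)" using idle step(1,2) \<open>x \<in> A\<close> by blast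
  ultimately show ?case using step.IH by (simp add: step_unchanged_outside_comp)
qed simp

lemma path_step_stays_enabled:
  assumes path: "is_path st ac len" and "step (st i) t s'" and "enat m \<le> len" and "i \<le> m"
    and "\<forall>j. i \<le> j \<longrightarrow> j < m \<longrightarrow> comp (ac j) \<inter> comp t = {}"
  shows "\<exists>s''. step (st m) t s''"
proof -
  have "\<forall>x\<in>comp t. st m x = st i x"
    using path_agree_on[OF path assms(3-5)] by blast
  then show ?thesis using step_if_agree_on_comp[OF assms(2)] by blast
qed

lemma just_if_sc_fair:
  assumes path: "is_path st ac len" and fair: "sc_fair st ac len"
  shows "just st ac len"
  unfolding just_def
proof (intro allI impI)
  fix k t s'
  assume k: "enat k \<le> len" and t: "step (st k) t s'"
  show "\<exists>j\<ge>k. enat j < len \<and> comp (ac j) \<inter> comp t \<noteq> {}"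
  proof (rule ccontr)
    assume unconflicted: "\<not> ?thesis"
    obtain p where p: "p \<in> comp t" by (cases t) auto
    have "enabled p (st m)" if "k \<le> m" "enat m \<le> len" for m
    proof -
      have "\<forall>j. k \<le> j \<longrightarrow> j < m \<longrightarrow> comp (ac j) \<inter> comp t = {}"
        using unconflicted that(2) by (meson enat_ord_simps(2) order_less_le_trans)
      then show ?thesis
        using path_step_stays_enabled[OF path t that(2,1)] p unfolding enabled_def by blast
    qed
    then have "relentlessly_enabled p st len k"
      unfolding relentlessly_enabled_def by blast
    then obtain j where "j \<ge> k" "enat j < len" "p \<in> comp (ac j)"
      using fair k unfolding sc_fair_def by blast
    then show False using unconflicted p by blast
  qed
qed

lemma sc_fair_if_just:
  assumes path: "is_path st ac len" and no_race: "\<And>i. enat i \<le> len \<Longrightarrow> \<not> has_race (st i)"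
    and just: "just st ac len"
  shows "sc_fair st ac len"
  unfolding sc_fair_def
proof (intro allI impI)
  fix k p
  assume "enat k \<le> len" and "relentlessly_enabled p st len k"
  then obtain i where i: "k \<le> i" "enat i \<le> len" "enabled p (st i)"
    unfolding relentlessly_enabled_def by blast
  then obtain t s' where t: "step (st i) t s'" and p: "p \<in> comp t"
    unfolding enabled_def by blast
  define conflict where "conflict j \<longleftrightarrow> i \<le> j \<and> enat j < len \<and> comp (ac j) \<inter> comp t \<noteq> {}" for j
  have "\<exists>j. conflict j" using just i(2) t unfolding just_def conflict_def by blast
  then obtain j where j: "conflict j" and first: "\<And>m. m < j \<Longrightarrow> \<not> conflict m"
    using exists_least_iff[of conflict] by blast
  then have "enat j < len" "i \<le> j" by (auto simp: conflict_def)
  moreover from this have "\<forall>m. i \<le> m \<longrightarrow> m < j \<longrightarrow> comp (ac m) \<inter> comp t = {}"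
    using first unfolding conflict_def by (meson enat_ord_simps(2) order_less_trans)
  ultimately obtain s'' where "step (st j) t s''"
    using path_step_stays_enabled[OF path t] by (meson order_less_imp_le)
  moreover have "\<not> has_race (st j)"
    using no_race \<open>enat j < len\<close> by (simp add: order_less_imp_le)
  moreover have "step (st j) (ac j) (st (Suc j))"
    using path_step[OF path \<open>enat j < len\<close>] .
  moreover have "comp t \<inter> comp (ac j) \<noteq> {}"
    using j unfolding conflict_def by blast
  ultimately have "comp t \<subseteq> comp (ac j)"
    using conflicting_step_covers_comp by blast
  then show "\<exists>j\<ge>k. enat j < len \<and> p \<in> comp (ac j)"
    using p i(1) \<open>i \<le> j\<close> \<open>enat j < len\<close> by (meson order_trans subsetD)
qed

theorem mainTheorem6:
  fixes N :: "('l, 'a, 'v) net"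
    and st :: "nat \<Rightarrow> ('l, 'a, 'v) net" and ac :: "nat \<Rightarrow> ('l, 'a) act" and len :: enat
  assumes "network N"
    and "race_free N"
    and "is_path st ac len"
    and "st 0 = N"
  shows "just st ac len \<longleftrightarrow> sc_fair st ac len"
proof -
  have "\<not> has_race (st i)" if "enat i \<le> len" for i
    using assms(2,4) path_reachable[OF assms(3) that] unfolding race_free_def by blast
  then show ?thesis
    using sc_fair_if_just just_if_sc_fair assms(3) by blast
qed

end
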